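(* Let $(G,k)$ be an instance, let $V_{\mathrm{ld}}$ be the set of large-dense vertices, let $X$ be a feasible solution, and let $P\subseteq V_{\mathrm{ld}}$ be a vertex triple $(v_1,v_2,v_3)$ inducing $P_3$. Then $X\cap P\neq\emptyset$.
   Context: Graphs are undirected, without self-loops, possibly with multi-edges. $N(v)$ is the set of vertices adjacent to $v$; $\rho(v)$ is the number of unordered pairs $\{u_1,u_2\}\subseteq N(v)$ joined by at least one edge. A vertex $v$ is large-dense if $|N(v)|>7k$ and $\rho(v)> |N(v)|(|N(v)|-1)/4$. A triple of distinct vertices $(v_1,v_2,v_3)$ induces $P_3$ if $v_1v_2$ and $v_2v_3$ are edges (possibly multi-edges) and $v_1v_3$ is not an edge. A vertex set induces a clique if between any two distinct vertices there is exactly one edge, and a tree if it is connected and acyclic (two parallel edges form a cycle). A feasible solution is $X\subseteq V$, $|X|\le k$, with every component of $G-X$ a clique or a tree. *)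

theory Defs
  imports Main
begin

text \<open>A multigraph on a finite vertex set V is given by an edge-multiplicity function
  m: m u v is the number of edges between u and v. Undirected (symmetric), no self-loops,
  and no edges leaving V.\<close>
definition multigraph :: "'a set \<Rightarrow> ('a \<Rightarrow> 'a \<Rightarrow> nat) \<Rightarrow> bool" where
  "multigraph V m \<longleftrightarrow> finite V \<and> (\<forall>u v. m u v = m v u) \<and> (\<forall>v. m v v = 0)
     \<and> (\<forall>u v. 0 < m u v \<longrightarrow> u \<in> V \<and> v \<in> V)"

definition nbhd :: "'a set \<Rightarrow> ('a \<Rightarrow> 'a \<Rightarrow> nat) \<Rightarrow> 'a \<Rightarrow> 'a set" where
  "nbhd V m v = {u \<in> V. 0 < m v u}"

definition rho :: "'a set \<Rightarrow> ('a \<Rightarrow> 'a \<Rightarrow> nat) \<Rightarrow> 'a \<Rightarrow> nat" where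
  "rho V m v = card {{u1, u2} | u1 u2. u1 \<in> nbhd V m v \<and> u2 \<in> nbhd V m v \<and> u1 \<noteq> u2 \<and> 0 < m u1 u2}"

text \<open>Large-dense: |N(v)| > 7k and rho(v) > |N(v)|(|N(v)|-1)/4 (multiplied by 4 to stay in nat).\<close>
definition large_dense :: "'a set \<Rightarrow> ('a \<Rightarrow> 'a \<Rightarrow> nat) \<Rightarrow> nat \<Rightarrow> 'a \<Rightarrow> bool" where
  "large_dense V m k v \<longleftrightarrow> v \<in> V \<and> card (nbhd V m v) > 7 * k
     \<and> 4 * rho V m v > card (nbhd V m v) * (card (nbhd V m v) - 1)"

definition adj_in :: "('a \<Rightarrow> 'a \<Rightarrow> nat) \<Rightarrow> 'a set \<Rightarrow> 'a \<Rightarrow> 'a \<Rightarrow> bool" where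
  "adj_in m S u v \<longleftrightarrow> u \<in> S \<and> v \<in> S \<and> 0 < m u v"

definition connected_in :: "('a \<Rightarrow> 'a \<Rightarrow> nat) \<Rightarrow> 'a set \<Rightarrow> bool" where
  "connected_in m S \<longleftrightarrow> (\<forall>u\<in>S. \<forall>v\<in>S. (adj_in m S)\<^sup>*\<^sup>* u v)"

definition components_in :: "('a \<Rightarrow> 'a \<Rightarrow> nat) \<Rightarrow> 'a set \<Rightarrow> 'a set set" where
  "components_in m S = {{u. (adj_in m S)\<^sup>*\<^sup>* v u} | v. v \<in> S}"

definition is_clique :: "('a \<Rightarrow> 'a \<Rightarrow> nat) \<Rightarrow> 'a set \<Rightarrow> bool" where
  "is_clique m C \<longleftrightarrow> (\<forall>u\<in>C. \<forall>v\<in>C. u \<noteq> v \<longrightarrow> m u v = 1)"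

text \<open>A cycle in G[C]: either two parallel edges (a 2-cycle), or a closed walk through
  at least 3 distinct vertices.\<close>
definition has_cycle :: "('a \<Rightarrow> 'a \<Rightarrow> nat) \<Rightarrow> 'a set \<Rightarrow> bool" where
  "has_cycle m C \<longleftrightarrow>
     (\<exists>u\<in>C. \<exists>v\<in>C. 2 \<le> m u v)
   \<or> (\<exists>cs. distinct cs \<and> 3 \<le> length cs \<and> set cs \<subseteq> C
         \<and> (\<forall>i < length cs. 0 < m (cs ! i) (cs ! ((i + 1) mod length cs))))"

definition is_tree :: "('a \<Rightarrow> 'a \<Rightarrow> nat) \<Rightarrow> 'a set \<Rightarrow> bool" where
  "is_tree m C \<longleftrightarrow> connected_in m C \<and> \<not> has_cycle m C"

definition feasible :: "'a set \<Rightarrow> ('a \<Rightarrow> 'a \<Rightarrow> nat) \<Rightarrow> nat \<Rightarrow> 'a set \<Rightarrow> bool" where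
  "feasible V m k X \<longleftrightarrow> X \<subseteq> V \<and> card X \<le> k
     \<and> (\<forall>C \<in> components_in m (V - X). is_clique m C \<or> is_tree m C)"

definition induces_P3 :: "('a \<Rightarrow> 'a \<Rightarrow> nat) \<Rightarrow> 'a \<Rightarrow> 'a \<Rightarrow> 'a \<Rightarrow> bool" where
  "induces_P3 m v1 v2 v3 \<longleftrightarrow> v1 \<noteq> v2 \<and> v2 \<noteq> v3 \<and> v1 \<noteq> v3
     \<and> 0 < m v1 v2 \<and> 0 < m v2 v3 \<and> m v1 v3 = 0"

end

theory Submission
  imports Defs
begin

text \<open>Only the middle vertex v2 needs to be large-dense. At most k deleted vertices meet at
  most k |N(v2)| \<le> |N(v2)|(|N(v2)| - 1)/4 < \<rho>(v2) of the edges inside N(v2), so some edge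
  u1 u2 inside N(v2) survives the deletion of X. If X avoids v1, v2, v3, the component of v2
  in G - X then contains the triangle v2 u1 u2 and the non-adjacent pair v1, v3, so it is
  neither a tree nor a clique.\<close>

lemma card_doubletons_meeting_le:
  assumes "finite N"
  shows "card {{x, u} | x u. x \<in> X \<inter> N \<and> u \<in> N} \<le> card (X \<inter> N) * card N"
proof -
  have "{{x, u} | x u. x \<in> X \<inter> N \<and> u \<in> N} = (\<lambda>(x, u). {x, u}) ` ((X \<inter> N) \<times> N)"
    by auto
  also have "card \<dots> \<le> card ((X \<inter> N) \<times> N)"
    using assms by (intro card_image_le) auto
  finally show ?thesis by (simp add: card_cartesian_product)
qed

lemma large_dense_nbhd_edge_avoiding:
  assumes "multigraph V m" "large_dense V m k v" "finite X" "card X \<le> k"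
  obtains u1 u2 where "u1 \<in> nbhd V m v" "u2 \<in> nbhd V m v" "u1 \<noteq> u2" "0 < m u1 u2"
    "u1 \<notin> X" "u2 \<notin> X"
proof -
  define N where "N = nbhd V m v"
  define d where "d = card N"
  define P where "P = {{u1, u2} | u1 u2. u1 \<in> N \<and> u2 \<in> N \<and> u1 \<noteq> u2 \<and> 0 < m u1 u2}"
  define Q where "Q = {e \<in> P. e \<inter> X \<noteq> {}}"
  define M where "M = {{x, u} | x u. x \<in> X \<inter> N \<and> u \<in> N}"
  have dense: "d > 7 * k" "4 * card P > d * (d - 1)"
    using assms(2) unfolding large_dense_def rho_def N_def d_def P_def by auto
  have "finite N"
    using assms(1) unfolding multigraph_def N_def nbhd_def by auto
  have "P \<subseteq> Pow N" "M \<subseteq> Pow N"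
    unfolding P_def M_def by blast+
  then have "finite P" "finite M"
    using \<open>finite N\<close> by (auto intro: finite_subset)
  have "Q \<subseteq> M"
  proof
    fix e assume "e \<in> Q"
    then obtain u1 u2 where "e = {u1, u2}" "u1 \<in> N" "u2 \<in> N" "u1 \<in> X \<or> u2 \<in> X"
      unfolding Q_def P_def by auto
    then show "e \<in> M"
      unfolding M_def by (auto simp: insert_commute)
  qed
  then have "card Q \<le> card M"
    using \<open>finite M\<close> by (rule card_mono[rotated])
  also have "\<dots> \<le> card (X \<inter> N) * d"
    unfolding M_def d_def using \<open>finite N\<close> by (rule card_doubletons_meeting_le)
  also have "\<dots> \<le> k * d"
    using assms(3,4) card_mono[of X "X \<inter> N"] by simp
  finally have "card Q \<le> k * d" .
  moreover have "4 * (k * d) \<le> d * (d - 1)"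
    using dense(1) mult_right_mono[of "4 * k" "d - 1" d] by (simp add: ac_simps)
  ultimately have "card Q < card P"
    using dense(2) by linarith
  moreover have "finite Q"
    using \<open>finite P\<close> unfolding Q_def by simp
  ultimately have "\<not> P \<subseteq> Q"
    using card_mono[of Q P] by linarith
  then obtain e where "e \<in> P" "e \<notin> Q" by blast
  then show thesis
    using that unfolding P_def Q_def N_def by auto
qed

lemma reach_class_in_components:
  assumes "v \<in> S"
  shows "{u. (adj_in m S)\<^sup>*\<^sup>* v u} \<in> components_in m S"
  using assms unfolding components_in_def by blast

lemma neighbour_in_reach_class:
  assumes "u \<in> S" "v \<in> S" "0 < m v u"
  shows "u \<in> {w. (adj_in m S)\<^sup>*\<^sup>* v w}"
  using assms unfolding adj_in_def by auto

lemma triangle_has_cycle: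
  assumes "{a, b, c} \<subseteq> C" "distinct [a, b, c]" "0 < m a b" "0 < m b c" "0 < m c a"
  shows "has_cycle m C"
  unfolding has_cycle_def
proof (intro disjI2 exI[of _ "[a, b, c]"] conjI allI impI)
  fix i assume "i < length [a, b, c]"
  then have "i = 0 \<or> i = 1 \<or> i = 2" by auto
  then show "0 < m ([a, b, c] ! i) ([a, b, c] ! ((i + 1) mod length [a, b, c]))"
    using assms by auto
qed (use assms in auto)

lemma triangle_and_non_edge_neither_clique_nor_tree:
  assumes "{a, b, c, x, y} \<subseteq> C" "distinct [a, b, c]" "0 < m a b" "0 < m b c" "0 < m c a"
    and "x \<noteq> y" "m x y = 0"
  shows "\<not> is_clique m C \<and> \<not> is_tree m C"
proof
  show "\<not> is_clique m C"
    using assms(1,6,7) unfolding is_clique_def by fastforce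
  have "has_cycle m C"
    using assms(1-5) by (intro triangle_has_cycle) auto
  then show "\<not> is_tree m C"
    unfolding is_tree_def by blast
qed

theorem mainTheorem11:
  fixes V :: "'a set" and m :: "'a \<Rightarrow> 'a \<Rightarrow> nat" and k :: nat
    and X :: "'a set" and v1 v2 v3 :: 'a
  assumes "multigraph V m"
    and "feasible V m k X"
    and "{v1, v2, v3} \<subseteq> {v \<in> V. large_dense V m k v}"
    and "induces_P3 m v1 v2 v3"
  shows "X \<inter> {v1, v2, v3} \<noteq> {}"
proof
  assume avoid: "X \<inter> {v1, v2, v3} = {}"
  have mg: "finite V" "\<And>u v. m u v = m v u" "\<And>v. m v v = 0"
    using assms(1) unfolding multigraph_def by auto
  have X: "X \<subseteq> V" "card X \<le> k"
    "\<And>C. C \<in> components_in m (V - X) \<Longrightarrow> is_clique m C \<or> is_tree m C"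
    using assms(2) unfolding feasible_def by auto
  have P3: "v1 \<noteq> v3" "0 < m v2 v1" "0 < m v2 v3" "m v1 v3 = 0"
    using assms(4) mg(2)[of v1 v2] unfolding induces_P3_def by auto
  obtain u1 u2 where u: "u1 \<in> nbhd V m v2" "u2 \<in> nbhd V m v2" "u1 \<noteq> u2" "0 < m u1 u2"
    "u1 \<notin> X" "u2 \<notin> X"
    using large_dense_nbhd_edge_avoiding[OF assms(1) _ finite_subset[OF X(1) mg(1)] X(2)] assms(3)
    by blast
  have u_adj: "0 < m v2 u1" "0 < m v2 u2" "u1 \<in> V" "u2 \<in> V"
    using u unfolding nbhd_def by auto
  define C where "C = {w. (adj_in m (V - X))\<^sup>*\<^sup>* v2 w}"
  have "v2 \<in> V - X"
    using assms(3) avoid by auto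
  then have "C \<in> components_in m (V - X)"
    unfolding C_def by (rule reach_class_in_components)
  have "{v1, v2, v3, u1, u2} \<subseteq> C"
    using neighbour_in_reach_class[OF _ \<open>v2 \<in> V - X\<close>] assms(3) avoid u u_adj P3
    unfolding C_def by auto
  moreover have "distinct [v2, u1, u2]"
    using u_adj u(3) mg(3) by auto
  ultimately have "\<not> is_clique m C \<and> \<not> is_tree m C"
    using u u_adj P3 mg(2)[of u2 v2]
    by (intro triangle_and_non_edge_neither_clique_nor_tree[of v2 u1 u2 v1 v3]) auto
  then show False
    using X(3)[OF \<open>C \<in> components_in m (V - X)\<close>] by blast
qed

end
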